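(* Let $G$ be a graph and let $\mathbf{K}=(K,\mathbf{a},\mathbf{b})\in\mathscr{G}(k,l)$, $\mathbf{H}=(H,\mathbf{a}',\mathbf{b}')\in\mathscr{G}(k',l')$. Then: (1) $\hat T^G_{\mathbf{K}}\otimes\hat T^G_{\mathbf{H}}=\sum_f\hat T^G_{\mathbf{K}\cup_f\mathbf{H}}$, where the sum runs over all vertex overlaps $f$ of $K$ and $H$; (2) if $k'=l$, then $\hat T^G_{\mathbf{H}}\hat T^G_{\mathbf{K}}=\sum_f\hat T^G_{\mathbf{H}\cdot_f\mathbf{K}}$, where the sum runs over all vertex overlaps $f$ of $K$ and $H$ with $(b_i,a'_i)\in f$ for all $i$; in particular $\hat T^G_{\mathbf{H}}\hat T^G_{\mathbf{K}}=0$ if $\ker\mathbf{b}\ne\ker\mathbf{a}'$; (3) $(\hat T^G_{\mathbf{K}})^*=\hat T^G_{\mathbf{K}^*}$.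
   Context: Graphs are finite, undirected, without multiple edges, loops allowed; graph homomorphisms map edges (including loops) to edges. A bilabelled graph $(K,\mathbf{a},\mathbf{b})\in\mathscr{G}(k,l)$ consists of a graph $K$ and tuples $\mathbf{a}\in V(K)^k$, $\mathbf{b}\in V(K)^l$ (up to isomorphism); its involution is $(K,\mathbf{b},\mathbf{a})$. A vertex overlap of $K,H$ is a subset $f\subset V(K)\times V(H)$ in which each vertex occurs at most once; $K\cup_fH$ is the quotient of $K\sqcup H$ identifying $v$ with $w$ for $(v,w)\in f$ (edges between vertices of the quotient iff between some representatives), with induced maps $f_K,f_H$. Then $\mathbf{K}\cup_f\mathbf{H}:=(K\cup_fH,f_K(\mathbf{a})f_H(\mathbf{a}'),f_K(\mathbf{b})f_H(\mathbf{b}'))$ (concatenated tuples), and, if $(b_i,a'_i)\in f$ for all $i$, $\mathbf{H}\cdot_f\mathbf{K}:=(K\cup_fH,f_K(\mathbf{a}),f_H(\mathbf{b}'))$. $\ker\mathbf{b}$ is the partition of positions of $\mathbf{b}$ by equal entries. With the vertices of $G$ labelled $1,\dots,n$, $\hat T^G_{\mathbf{K}}\colon(\mathbb{C}^n)^{\otimes k}\to(\mathbb{C}^n)^{\otimes l}$ has entries $[\hat T^G_{\mathbf{K}}]_{\mathbf{j}\mathbf{i}}=\#\{\phi\colon K\to G\text{ injective homomorphism}\mid\phi(\mathbf{a})=\mathbf{i},\phi(\mathbf{b})=\mathbf{j}\}$ (coefficient of $e_{j_1}\otimes\cdots\otimes e_{j_l}$ in the image of $e_{i_1}\otimes\cdots\otimes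 e_{i_k}$). *)

theory Defs
  imports Complex_Main "HOL-Library.FuncSet"
begin

text \<open>Graphs: finite vertex set, symmetric edge relation (loops allowed, no multi-edges).\<close>
record 'v graph =
  verts :: "'v set"
  edges :: "('v \<times> 'v) set"

definition is_graph :: "'v graph \<Rightarrow> bool" where
  "is_graph G \<longleftrightarrow> finite (verts G) \<and> edges G \<subseteq> verts G \<times> verts G \<and> sym (edges G)"

definition is_bilabelled :: "'v graph \<Rightarrow> 'v list \<Rightarrow> 'v list \<Rightarrow> bool" where
  "is_bilabelled K a b \<longleftrightarrow> is_graph K \<and> set a \<subseteq> verts K \<and> set b \<subseteq> verts K"

definition inj_hom :: "'v graph \<Rightarrow> 'g graph \<Rightarrow> ('v \<Rightarrow> 'g) \<Rightarrow> bool" where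
  "inj_hom K G \<phi> \<longleftrightarrow> \<phi> \<in> verts K \<rightarrow>\<^sub>E verts G \<and> inj_on \<phi> (verts K) \<and>
     (\<forall>(u, v) \<in> edges K. (\<phi> u, \<phi> v) \<in> edges G)"

text \<open>Linear maps (C^V)^{\<otimes>k} \<rightarrow> (C^V)^{\<otimes>l} are represented by their matrices,
  indexed by tuples (lists) of vertices of G: entry (j, i) is the coefficient of e_j in the
  image of e_i.  Entries outside the relevant index sets are 0.\<close>
type_synonym 'g op = "'g list \<Rightarrow> 'g list \<Rightarrow> complex"

definition hom_op :: "'g graph \<Rightarrow> 'v graph \<Rightarrow> 'v list \<Rightarrow> 'v list \<Rightarrow> 'g op" where
  "hom_op G K a b = (\<lambda>j i. of_nat (card {\<phi>. inj_hom K G \<phi> \<and> map \<phi> a = i \<and> map \<phi> b = j}))"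

definition op_tensor :: "nat \<Rightarrow> nat \<Rightarrow> nat \<Rightarrow> nat \<Rightarrow> 'g op \<Rightarrow> 'g op \<Rightarrow> 'g op" where
  "op_tensor k l k' l' A B = (\<lambda>j i. if length j = l + l' \<and> length i = k + k'
      then A (take l j) (take k i) * B (drop l j) (drop k i) else 0)"

definition op_comp :: "'g set \<Rightarrow> nat \<Rightarrow> 'g op \<Rightarrow> 'g op \<Rightarrow> 'g op" where
  "op_comp V m B A = (\<lambda>j i. \<Sum>t\<in>{t. set t \<subseteq> V \<and> length t = m}. B j t * A t i)"

definition op_adj :: "'g op \<Rightarrow> 'g op" where
  "op_adj A = (\<lambda>j i. cnj (A i j))"

definition op_zero :: "'g op" where
  "op_zero = (\<lambda>j i. 0)"

definition vertex_overlap :: "'a graph \<Rightarrow> 'b graph \<Rightarrow> ('a \<times> 'b) set \<Rightarrow> bool" where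
  "vertex_overlap K H f \<longleftrightarrow> f \<subseteq> verts K \<times> verts H \<and>
     (\<forall>v w w'. (v, w) \<in> f \<longrightarrow> (v, w') \<in> f \<longrightarrow> w = w') \<and>
     (\<forall>v v' w. (v, w) \<in> f \<longrightarrow> (v', w) \<in> f \<longrightarrow> v = v')"

text \<open>The quotient K \<union>_f H: vertices are equivalence classes in the disjoint union.\<close>
definition fK :: "('a \<times> 'b) set \<Rightarrow> 'a \<Rightarrow> ('a + 'b) set" where
  "fK f v = insert (Inl v) {Inr w | w. (v, w) \<in> f}"

definition fH :: "('a \<times> 'b) set \<Rightarrow> 'b \<Rightarrow> ('a + 'b) set" where
  "fH f w = insert (Inr w) {Inl v | v. (v, w) \<in> f}"

definition sum_edges :: "'a graph \<Rightarrow> 'b graph \<Rightarrow> (('a + 'b) \<times> ('a + 'b)) set" where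
  "sum_edges K H = {(Inl u, Inl v) | u v. (u, v) \<in> edges K} \<union> {(Inr u, Inr v) | u v. (u, v) \<in> edges H}"

definition glue :: "'a graph \<Rightarrow> 'b graph \<Rightarrow> ('a \<times> 'b) set \<Rightarrow> ('a + 'b) set graph" where
  "glue K H f =
     (let V = fK f ` verts K \<union> fH f ` verts H
      in \<lparr>verts = V, edges = {(c, d). c \<in> V \<and> d \<in> V \<and> (\<exists>x\<in>c. \<exists>y\<in>d. (x, y) \<in> sum_edges K H)}\<rparr>)"

text \<open>Kernel of a tuple: the partition of positions by equal entries (as an equivalence relation).\<close>
definition ker :: "'v list \<Rightarrow> (nat \<times> nat) set" where
  "ker b = {(i, j). i < length b \<and> j < length b \<and> b ! i = b ! j}"

end

theory Submission
  imports Defs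
begin

text \<open>An injective homomorphism \<open>\<chi>\<close> of \<open>K \<union>\<^sub>f H\<close> into \<open>G\<close> restricts to a pair of injective
  homomorphisms \<open>\<phi> = \<chi> \<circ> f\<^sub>K\<close>, \<open>\<psi> = \<chi> \<circ> f\<^sub>H\<close>, and \<open>f\<close> is recovered as the set of pairs \<open>(v, w)\<close>
  with \<open>\<phi> v = \<psi> w\<close>. Conversely every pair \<open>(\<phi>, \<psi>)\<close> glues along this overlap to an injective
  homomorphism of \<open>K \<union>\<^sub>f H\<close>. Hence the pairs \<open>(f, \<chi>)\<close> are in bijection with the pairs \<open>(\<phi>, \<psi>)\<close>, and
  counting both sides with prescribed labels gives the tensor formula. The entries of the product
  \<open>T\<^sub>H T\<^sub>K\<close> count the pairs with \<open>\<phi> b = \<psi> a'\<close>, which under the bijection means \<open>(b\<^sub>i, a'\<^sub>i) \<in> f\<close>;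
  such a pair can only exist if \<open>ker b = ker a'\<close>, as \<open>\<phi>\<close> and \<open>\<psi>\<close> are injective. The adjoint
  formula holds because all entries are natural numbers.\<close>

lemma mem_fK: "x \<in> fK f v \<longleftrightarrow> x = Inl v \<or> (\<exists>w. x = Inr w \<and> (v, w) \<in> f)"
  by (auto simp: fK_def)

lemma mem_fH: "x \<in> fH f w \<longleftrightarrow> x = Inr w \<or> (\<exists>v. x = Inl v \<and> (v, w) \<in> f)"
  by (auto simp: fH_def)

lemma inj_fK: "inj (fK f)"
  by (rule injI) (metis mem_fK sum.distinct(1) sum.inject(1))

lemma inj_fH: "inj (fH f)"
  by (rule injI) (metis mem_fH sum.distinct(1) sum.inject(2))

lemma fK_eq_fH_iff:
  assumes "vertex_overlap K H f"
  shows "fK f v = fH f w \<longleftrightarrow> (v, w) \<in> f"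
  using assms unfolding vertex_overlap_def set_eq_iff mem_fK mem_fH by blast

lemma glue_verts: "verts (glue K H f) = fK f ` verts K \<union> fH f ` verts H"
  by (simp add: glue_def Let_def)

lemma glue_edges:
  "edges (glue K H f) = {(c, d). c \<in> verts (glue K H f) \<and> d \<in> verts (glue K H f) \<and>
     (\<exists>x\<in>c. \<exists>y\<in>d. (x, y) \<in> sum_edges K H)}"
  by (simp add: glue_def Let_def)

lemma fK_edge_glue:
  assumes "is_graph K" "(u, v) \<in> edges K"
  shows "(fK f u, fK f v) \<in> edges (glue K H f)"
proof -
  have "u \<in> verts K" "v \<in> verts K" using assms unfolding is_graph_def by auto
  moreover have "(Inl u, Inl v) \<in> sum_edges K H" using assms(2) by (simp add: sum_edges_def)
  moreover have "Inl u \<in> fK f u" "Inl v \<in> fK f v" by (simp_all add: mem_fK)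
  ultimately show ?thesis unfolding glue_edges glue_verts by blast
qed

lemma fH_edge_glue:
  assumes "is_graph H" "(u, v) \<in> edges H"
  shows "(fH f u, fH f v) \<in> edges (glue K H f)"
proof -
  have "u \<in> verts H" "v \<in> verts H" using assms unfolding is_graph_def by auto
  moreover have "(Inr u, Inr v) \<in> sum_edges K H" using assms(2) by (simp add: sum_edges_def)
  moreover have "Inr u \<in> fH f u" "Inr v \<in> fH f v" by (simp_all add: mem_fH)
  ultimately show ?thesis unfolding glue_edges glue_verts by blast
qed

lemma inj_hom_restrict_fK:
  assumes "is_graph K" "inj_hom (glue K H f) G \<chi>"
  shows "inj_hom K G (restrict (\<chi> \<circ> fK f) (verts K))"
proof -
  have "inj_on \<chi> (fK f ` verts K)"
    using assms(2) unfolding inj_hom_def glue_verts by (auto intro: inj_on_subset)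
  then have "inj_on (\<chi> \<circ> fK f) (verts K)"
    using inj_fK by (blast intro: comp_inj_on inj_on_subset)
  moreover have "restrict (\<chi> \<circ> fK f) (verts K) \<in> verts K \<rightarrow>\<^sub>E verts G"
    using assms(2) unfolding inj_hom_def glue_verts by auto
  moreover have "(\<chi> (fK f u), \<chi> (fK f v)) \<in> edges G" if "(u, v) \<in> edges K" for u v
    using assms fK_edge_glue[OF assms(1) that] unfolding inj_hom_def by blast
  ultimately show ?thesis
    using assms(1) unfolding inj_hom_def is_graph_def by auto
qed

lemma inj_hom_restrict_fH:
  assumes "is_graph H" "inj_hom (glue K H f) G \<chi>"
  shows "inj_hom H G (restrict (\<chi> \<circ> fH f) (verts H))"
proof -
  have "inj_on \<chi> (fH f ` verts H)"
    using assms(2) unfolding inj_hom_def glue_verts by (auto intro: inj_on_subset)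
  then have "inj_on (\<chi> \<circ> fH f) (verts H)"
    using inj_fH by (blast intro: comp_inj_on inj_on_subset)
  moreover have "restrict (\<chi> \<circ> fH f) (verts H) \<in> verts H \<rightarrow>\<^sub>E verts G"
    using assms(2) unfolding inj_hom_def glue_verts by auto
  moreover have "(\<chi> (fH f u), \<chi> (fH f v)) \<in> edges G" if "(u, v) \<in> edges H" for u v
    using assms fH_edge_glue[OF assms(1) that] unfolding inj_hom_def by blast
  ultimately show ?thesis
    using assms(1) unfolding inj_hom_def is_graph_def by auto
qed

lemma map_restrict_comp: "set xs \<subseteq> A \<Longrightarrow> map (restrict (g \<circ> h) A) xs = map g (map h xs)"
  by (induction xs) auto

definition hom_overlap :: "'a graph \<Rightarrow> 'b graph \<Rightarrow> ('a \<Rightarrow> 'g) \<Rightarrow> ('b \<Rightarrow> 'g) \<Rightarrow> ('a \<times> 'b) set" where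
  "hom_overlap K H \<phi> \<psi> = {(v, w) \<in> verts K \<times> verts H. \<phi> v = \<psi> w}"

lemma mem_hom_overlap:
  "(v, w) \<in> hom_overlap K H \<phi> \<psi> \<longleftrightarrow> v \<in> verts K \<and> w \<in> verts H \<and> \<phi> v = \<psi> w"
  by (simp add: hom_overlap_def)

lemma vertex_overlap_hom_overlap:
  "inj_on \<phi> (verts K) \<Longrightarrow> inj_on \<psi> (verts H) \<Longrightarrow> vertex_overlap K H (hom_overlap K H \<phi> \<psi>)"
  by (auto simp: vertex_overlap_def mem_hom_overlap inj_on_def)

lemma map_eq_map_iff_hom_overlap:
  assumes "set xs \<subseteq> verts K" "set ys \<subseteq> verts H" "length xs = length ys"
  shows "map \<phi> xs = map \<psi> ys \<longleftrightarrow> (\<forall>k < length xs. (xs ! k, ys ! k) \<in> hom_overlap K H \<phi> \<psi>)"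
  using assms by (auto simp: list_eq_iff_nth_eq mem_hom_overlap)

definition glue_hom :: "'a graph \<Rightarrow> 'b graph \<Rightarrow> ('a \<Rightarrow> 'g) \<Rightarrow> ('b \<Rightarrow> 'g) \<Rightarrow> ('a + 'b) set \<Rightarrow> 'g" where
  "glue_hom K H \<phi> \<psi> =
     restrict (\<lambda>c. case_sum \<phi> \<psi> (SOME x. x \<in> c)) (verts (glue K H (hom_overlap K H \<phi> \<psi>)))"

lemma glue_hom_eq:
  assumes "c \<in> verts (glue K H (hom_overlap K H \<phi> \<psi>))" "x \<in> c"
  shows "glue_hom K H \<phi> \<psi> c = case_sum \<phi> \<psi> x"
proof -
  have "case_sum \<phi> \<psi> y = case_sum \<phi> \<psi> x" if "y \<in> c" for y
    using assms that by (auto simp: glue_verts mem_fK mem_fH mem_hom_overlap)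
  moreover have "(SOME y. y \<in> c) \<in> c" using assms(2) by (rule someI)
  ultimately show ?thesis using assms(1) by (simp add: glue_hom_def)
qed

lemma glue_hom_fK: "v \<in> verts K \<Longrightarrow> glue_hom K H \<phi> \<psi> (fK (hom_overlap K H \<phi> \<psi>) v) = \<phi> v"
  by (simp add: glue_hom_eq[where x = "Inl v"] glue_verts mem_fK)

lemma glue_hom_fH: "w \<in> verts H \<Longrightarrow> glue_hom K H \<phi> \<psi> (fH (hom_overlap K H \<phi> \<psi>) w) = \<psi> w"
  by (simp add: glue_hom_eq[where x = "Inr w"] glue_verts mem_fH)

lemma inj_hom_glue_hom:
  assumes "inj_hom K G \<phi>" "inj_hom H G \<psi>"
  shows "inj_hom (glue K H (hom_overlap K H \<phi> \<psi>)) G (glue_hom K H \<phi> \<psi>)"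
proof -
  let ?f = "hom_overlap K H \<phi> \<psi>" and ?\<chi> = "glue_hom K H \<phi> \<psi>"
  have ov: "vertex_overlap K H ?f"
    using assms by (simp add: inj_hom_def vertex_overlap_hom_overlap)
  have "?\<chi> \<in> extensional (verts (glue K H ?f))" by (simp add: glue_hom_def)
  moreover have "?\<chi> \<in> verts (glue K H ?f) \<rightarrow> verts G"
    using assms by (auto simp: glue_verts glue_hom_fK glue_hom_fH inj_hom_def)
  moreover have "inj_on ?\<chi> (verts (glue K H ?f))"
  proof (rule inj_onI)
    fix c d assume "c \<in> verts (glue K H ?f)" "d \<in> verts (glue K H ?f)" "?\<chi> c = ?\<chi> d"
    moreover have "inj_on \<phi> (verts K)" "inj_on \<psi> (verts H)" using assms by (simp_all add: inj_hom_def)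
    moreover have "fK ?f v = fH ?f w" if "v \<in> verts K" "w \<in> verts H" "\<phi> v = \<psi> w" for v w
      using that by (simp add: fK_eq_fH_iff[OF ov] mem_hom_overlap)
    ultimately show "c = d" unfolding glue_verts
      by (elim UnE imageE; simp add: glue_hom_fK glue_hom_fH; metis inj_onD)
  qed
  moreover have "(?\<chi> c, ?\<chi> d) \<in> edges G" if cd: "(c, d) \<in> edges (glue K H ?f)" for c d
  proof -
    obtain x y where "c \<in> verts (glue K H ?f)" "d \<in> verts (glue K H ?f)" "x \<in> c" "y \<in> d"
      and xy: "(x, y) \<in> sum_edges K H"
      using cd unfolding glue_edges by blast
    then have "?\<chi> c = case_sum \<phi> \<psi> x" "?\<chi> d = case_sum \<phi> \<psi> y" by (simp_all add: glue_hom_eq)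
    then show ?thesis using xy assms by (auto simp: sum_edges_def inj_hom_def)
  qed
  ultimately show ?thesis unfolding inj_hom_def PiE_iff by blast
qed

lemma hom_overlap_restrict:
  assumes "vertex_overlap K H f" "inj_on \<chi> (verts (glue K H f))"
  shows "hom_overlap K H (restrict (\<chi> \<circ> fK f) (verts K)) (restrict (\<chi> \<circ> fH f) (verts H)) = f"
proof -
  have "\<chi> (fK f v) = \<chi> (fH f w) \<longleftrightarrow> (v, w) \<in> f" if "v \<in> verts K" "w \<in> verts H" for v w
    using inj_on_eq_iff[OF assms(2)] fK_eq_fH_iff[OF assms(1)] that by (simp add: glue_verts)
  moreover have "f \<subseteq> verts K \<times> verts H" using assms(1) by (simp add: vertex_overlap_def)
  ultimately show ?thesis by (auto simp: hom_overlap_def)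
qed

lemma map_restrict_fK_eq_map_restrict_fH_iff:
  assumes "vertex_overlap K H f" "inj_hom (glue K H f) G \<chi>"
    and "set xs \<subseteq> verts K" "set ys \<subseteq> verts H" "length xs = length ys"
  shows "map (restrict (\<chi> \<circ> fK f) (verts K)) xs = map (restrict (\<chi> \<circ> fH f) (verts H)) ys
    \<longleftrightarrow> (\<forall>k < length xs. (xs ! k, ys ! k) \<in> f)"
proof -
  have "hom_overlap K H (restrict (\<chi> \<circ> fK f) (verts K)) (restrict (\<chi> \<circ> fH f) (verts H)) = f"
    using assms(1,2) by (simp add: hom_overlap_restrict inj_hom_def)
  with assms(3-5) show ?thesis by (simp add: map_eq_map_iff_hom_overlap)
qed

lemma glue_hom_restrict:
  assumes "vertex_overlap K H f" "inj_hom (glue K H f) G \<chi>"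
  shows "glue_hom K H (restrict (\<chi> \<circ> fK f) (verts K)) (restrict (\<chi> \<circ> fH f) (verts H)) = \<chi>"
proof -
  let ?\<phi> = "restrict (\<chi> \<circ> fK f) (verts K)" and ?\<psi> = "restrict (\<chi> \<circ> fH f) (verts H)"
  have f: "hom_overlap K H ?\<phi> ?\<psi> = f"
    using assms by (simp add: hom_overlap_restrict inj_hom_def)
  have "glue_hom K H ?\<phi> ?\<psi> \<in> extensional (verts (glue K H f))"
    using f by (metis glue_hom_def restrict_extensional)
  moreover have "\<chi> \<in> extensional (verts (glue K H f))"
    using assms(2) by (simp add: inj_hom_def PiE_iff)
  moreover have "glue_hom K H ?\<phi> ?\<psi> c = \<chi> c" if "c \<in> verts (glue K H f)" for c
    using that glue_hom_fK[of _ K H ?\<phi> ?\<psi>] glue_hom_fH[of _ H K ?\<phi> ?\<psi>] unfolding f glue_verts by auto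
  ultimately show ?thesis by (rule extensionalityI)
qed

lemma restrict_glue_hom_fK:
  "\<phi> \<in> extensional (verts K) \<Longrightarrow> restrict (glue_hom K H \<phi> \<psi> \<circ> fK (hom_overlap K H \<phi> \<psi>)) (verts K) = \<phi>"
  by (rule extensionalityI[OF restrict_extensional]) (simp_all add: glue_hom_fK)

lemma restrict_glue_hom_fH:
  "\<psi> \<in> extensional (verts H) \<Longrightarrow> restrict (glue_hom K H \<phi> \<psi> \<circ> fH (hom_overlap K H \<phi> \<psi>)) (verts H) = \<psi>"
  by (rule extensionalityI[OF restrict_extensional]) (simp_all add: glue_hom_fH)

lemma bij_betw_glue_inj_homs_inj_hom_pairs:
  assumes "is_graph K" "is_graph H"
  shows "bij_betw (\<lambda>(f, \<chi>). (restrict (\<chi> \<circ> fK f) (verts K), restrict (\<chi> \<circ> fH f) (verts H)))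
           (SIGMA f:{f. vertex_overlap K H f}. {\<chi>. inj_hom (glue K H f) G \<chi>})
           {(\<phi>, \<psi>). inj_hom K G \<phi> \<and> inj_hom H G \<psi>}"
    (is "bij_betw ?split ?glued ?pairs")
proof (rule bij_betw_byWitness[where f' = "\<lambda>(\<phi>, \<psi>). (hom_overlap K H \<phi> \<psi>, glue_hom K H \<phi> \<psi>)"])
  show "\<forall>p \<in> ?glued. (\<lambda>(\<phi>, \<psi>). (hom_overlap K H \<phi> \<psi>, glue_hom K H \<phi> \<psi>)) (?split p) = p"
    by (auto simp: hom_overlap_restrict glue_hom_restrict inj_hom_def)
  show "\<forall>p \<in> ?pairs. ?split ((\<lambda>(\<phi>, \<psi>). (hom_overlap K H \<phi> \<psi>, glue_hom K H \<phi> \<psi>)) p) = p"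
    by (auto simp: restrict_glue_hom_fK restrict_glue_hom_fH inj_hom_def PiE_iff)
  show "?split ` ?glued \<subseteq> ?pairs"
    using assms by (auto intro: inj_hom_restrict_fK inj_hom_restrict_fH)
  show "(\<lambda>(\<phi>, \<psi>). (hom_overlap K H \<phi> \<psi>, glue_hom K H \<phi> \<psi>)) ` ?pairs \<subseteq> ?glued"
    by (auto intro: inj_hom_glue_hom vertex_overlap_hom_overlap simp: inj_hom_def[of K] inj_hom_def[of H])
qed

lemma finite_inj_homs: "finite (verts K) \<Longrightarrow> finite (verts G) \<Longrightarrow> finite {\<phi>. inj_hom K G \<phi>}"
  by (rule finite_subset[OF _ finite_PiE]) (auto simp: inj_hom_def)

lemma finite_vertex_overlaps:
  "finite (verts K) \<Longrightarrow> finite (verts H) \<Longrightarrow> finite {f. vertex_overlap K H f}"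
  by (rule finite_subset[of _ "Pow (verts K \<times> verts H)"]) (auto simp: vertex_overlap_def)

lemma card_inj_hom_pairs_eq_sum_overlaps:
  assumes "is_graph K" "is_graph H" "finite (verts G)"
  shows "card {(\<phi>, \<psi>). inj_hom K G \<phi> \<and> inj_hom H G \<psi> \<and> Q \<phi> \<psi>} =
    (\<Sum>f | vertex_overlap K H f. card {\<chi>. inj_hom (glue K H f) G \<chi> \<and>
       Q (restrict (\<chi> \<circ> fK f) (verts K)) (restrict (\<chi> \<circ> fH f) (verts H))})"
proof -
  let ?split = "\<lambda>(f, \<chi>). (restrict (\<chi> \<circ> fK f) (verts K), restrict (\<chi> \<circ> fH f) (verts H))"
  let ?glued = "SIGMA f:{f. vertex_overlap K H f}. {\<chi>. inj_hom (glue K H f) G \<chi>}"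
  have finite_verts: "finite (verts K)" "finite (verts H)"
    using assms by (simp_all add: is_graph_def)
  have "(\<Sum>f | vertex_overlap K H f. card {\<chi>. inj_hom (glue K H f) G \<chi> \<and>
       Q (restrict (\<chi> \<circ> fK f) (verts K)) (restrict (\<chi> \<circ> fH f) (verts H))})
    = card (SIGMA f:{f. vertex_overlap K H f}. {\<chi>. inj_hom (glue K H f) G \<chi> \<and>
       Q (restrict (\<chi> \<circ> fK f) (verts K)) (restrict (\<chi> \<circ> fH f) (verts H))})"
    using finite_verts assms(3)
    by (intro card_SigmaI[symmetric] finite_vertex_overlaps ballI finite_subset[OF _ finite_inj_homs])
      (auto simp: glue_verts)
  also have "\<dots> = card {p \<in> ?glued. case_prod Q (?split p)}"
    by (rule arg_cong[where f = card]) auto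
  also have "\<dots> = card {p \<in> {(\<phi>, \<psi>). inj_hom K G \<phi> \<and> inj_hom H G \<psi>}. case_prod Q p}"
    by (rule bij_betw_same_card, rule bij_betw_Collect[OF bij_betw_glue_inj_homs_inj_hom_pairs[OF assms(1,2)]])
      simp
  also have "\<dots> = card {(\<phi>, \<psi>). inj_hom K G \<phi> \<and> inj_hom H G \<psi> \<and> Q \<phi> \<psi>}"
    by (rule arg_cong[where f = card]) auto
  finally show ?thesis ..
qed

lemma op_tensor_hom_op:
  "op_tensor (length a) (length b) (length a') (length b') (hom_op G K a b) (hom_op G H a' b') j i
    = of_nat (card {(\<phi>, \<psi>). inj_hom K G \<phi> \<and> inj_hom H G \<psi> \<and>
        map \<phi> a @ map \<psi> a' = i \<and> map \<phi> b @ map \<psi> b' = j})"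
proof (cases "length j = length b + length b' \<and> length i = length a + length a'")
  case True
  then have "{(\<phi>, \<psi>). inj_hom K G \<phi> \<and> inj_hom H G \<psi> \<and>
        map \<phi> a @ map \<psi> a' = i \<and> map \<phi> b @ map \<psi> b' = j}
      = {\<phi>. inj_hom K G \<phi> \<and> map \<phi> a = take (length a) i \<and> map \<phi> b = take (length b) j}
        \<times> {\<psi>. inj_hom H G \<psi> \<and> map \<psi> a' = drop (length a) i \<and> map \<psi> b' = drop (length b) j}"
    by (auto simp: append_eq_conv_conj)
  with True show ?thesis by (simp add: op_tensor_def hom_op_def card_cartesian_product)
next
  case False
  then have "{(\<phi>, \<psi>). inj_hom K G \<phi> \<and> inj_hom H G \<psi> \<and>
      map \<phi> a @ map \<psi> a' = i \<and> map \<phi> b @ map \<psi> b' = j} = {}"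
    by auto
  with False show ?thesis by (simp only: op_tensor_def) simp
qed

lemma op_comp_hom_op:
  assumes "finite (verts G)" "finite (verts K)" "finite (verts H)" "set b \<subseteq> verts K"
  shows "op_comp (verts G) (length b) (hom_op G H a' b') (hom_op G K a b) j i
    = of_nat (card {(\<phi>, \<psi>). inj_hom K G \<phi> \<and> inj_hom H G \<psi> \<and>
        map \<phi> a = i \<and> map \<psi> b' = j \<and> map \<phi> b = map \<psi> a'})"
proof -
  let ?P = "{(\<phi>, \<psi>). inj_hom K G \<phi> \<and> inj_hom H G \<psi> \<and>
    map \<phi> a = i \<and> map \<psi> b' = j \<and> map \<phi> b = map \<psi> a'}"
  let ?T = "{t. set t \<subseteq> verts G \<and> length t = length b}"
  have finite_P: "finite ?P"
    using assms by (intro finite_subset[OF _ finite_cartesian_product[OF finite_inj_homs finite_inj_homs]])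
      auto
  have middle_labels: "(\<lambda>p. map (fst p) b) ` ?P \<subseteq> ?T"
  proof (rule image_subsetI)
    fix p assume "p \<in> ?P"
    then have "fst p \<in> verts K \<rightarrow>\<^sub>E verts G" by (auto simp: inj_hom_def)
    then show "map (fst p) b \<in> ?T" using assms(4) by auto
  qed
  have "{p \<in> ?P. map (fst p) b = t} = {\<phi>. inj_hom K G \<phi> \<and> map \<phi> a = i \<and> map \<phi> b = t}
      \<times> {\<psi>. inj_hom H G \<psi> \<and> map \<psi> a' = t \<and> map \<psi> b' = j}" for t
    by auto
  then have "op_comp (verts G) (length b) (hom_op G H a' b') (hom_op G K a b) j i
      = of_nat (\<Sum>t\<in>?T. card {p \<in> ?P. map (fst p) b = t})"
    by (simp add: op_comp_def hom_op_def card_cartesian_product mult.commute)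
  also have "(\<Sum>t\<in>?T. card {p \<in> ?P. map (fst p) b = t}) = card ?P"
    using sum.group[OF finite_P finite_lists_length_eq[OF assms(1)] middle_labels, of "\<lambda>_. 1 :: nat"]
    by simp
  finally show ?thesis .
qed

lemma hom_op_tensor:
  assumes "is_graph G" "is_bilabelled K a b" "is_bilabelled H a' b'"
  shows "op_tensor (length a) (length b) (length a') (length b') (hom_op G K a b) (hom_op G H a' b')
    = (\<lambda>j i. \<Sum>f | vertex_overlap K H f.
         hom_op G (glue K H f) (map (fK f) a @ map (fH f) a') (map (fK f) b @ map (fH f) b') j i)"
    (is "?lhs = ?rhs")
proof (intro ext)
  fix j i
  show "?lhs j i = ?rhs j i"
    unfolding op_tensor_hom_op
    using assms card_inj_hom_pairs_eq_sum_overlaps[of K H G,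
        where Q = "\<lambda>\<phi> \<psi>. map \<phi> a @ map \<psi> a' = i \<and> map \<phi> b @ map \<psi> b' = j"]
    by (simp add: is_bilabelled_def is_graph_def hom_op_def map_restrict_comp)
qed

lemma hom_op_comp:
  assumes "is_graph G" "is_bilabelled K a b" "is_bilabelled H a' b'" "length a' = length b"
  shows "op_comp (verts G) (length b) (hom_op G H a' b') (hom_op G K a b)
    = (\<lambda>j i. \<Sum>f | vertex_overlap K H f \<and> (\<forall>k < length b. (b ! k, a' ! k) \<in> f).
         hom_op G (glue K H f) (map (fK f) a) (map (fH f) b') j i)"
    (is "?lhs = ?rhs")
proof (intro ext)
  fix j i
  let ?R = "\<lambda>f. \<forall>k < length b. (b ! k, a' ! k) \<in> f"
  let ?glued_homs = "\<lambda>f. {\<chi>. inj_hom (glue K H f) G \<chi> \<and>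
    map \<chi> (map (fK f) a) = i \<and> map \<chi> (map (fH f) b') = j}"
  have finite: "finite (verts G)" "finite (verts K)" "finite (verts H)"
    using assms(1-3) by (simp_all add: is_bilabelled_def is_graph_def)
  have labels: "set a \<subseteq> verts K" "set b \<subseteq> verts K" "set a' \<subseteq> verts H" "set b' \<subseteq> verts H"
    using assms(2,3) by (simp_all add: is_bilabelled_def)
  have "{\<chi>. inj_hom (glue K H f) G \<chi> \<and> map (restrict (\<chi> \<circ> fK f) (verts K)) a = i \<and>
        map (restrict (\<chi> \<circ> fH f) (verts H)) b' = j \<and>
        map (restrict (\<chi> \<circ> fK f) (verts K)) b = map (restrict (\<chi> \<circ> fH f) (verts H)) a'}
      = (if ?R f then ?glued_homs f else {})"
    if overlap: "vertex_overlap K H f" for f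
  proof -
    have "map (restrict (\<chi> \<circ> fK f) (verts K)) b = map (restrict (\<chi> \<circ> fH f) (verts H)) a' \<longleftrightarrow> ?R f"
      if "inj_hom (glue K H f) G \<chi>" for \<chi>
      using map_restrict_fK_eq_map_restrict_fH_iff[OF overlap that labels(2,3)] assms(4) by simp
    then show ?thesis using labels by (auto simp: map_restrict_comp)
  qed
  then have "card {(\<phi>, \<psi>). inj_hom K G \<phi> \<and> inj_hom H G \<psi> \<and>
        map \<phi> a = i \<and> map \<psi> b' = j \<and> map \<phi> b = map \<psi> a'}
      = (\<Sum>f | vertex_overlap K H f. card (if ?R f then ?glued_homs f else {}))"
    using assms(1-3) card_inj_hom_pairs_eq_sum_overlaps[of K H G,
        where Q = "\<lambda>\<phi> \<psi>. map \<phi> a = i \<and> map \<psi> b' = j \<and> map \<phi> b = map \<psi> a'"]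
    by (simp add: is_bilabelled_def is_graph_def)
  also have "\<dots> = (\<Sum>f | vertex_overlap K H f. if ?R f then card (?glued_homs f) else 0)"
    by (rule sum.cong) auto
  also have "\<dots> = (\<Sum>f | vertex_overlap K H f \<and> ?R f. card (?glued_homs f))"
    using finite by (simp add: sum.inter_filter[symmetric] finite_vertex_overlaps)
  finally show "?lhs j i = ?rhs j i"
    unfolding op_comp_hom_op[OF finite labels(2)] by (simp add: hom_op_def)
qed

lemma ker_map_inj_on: "inj_on \<phi> A \<Longrightarrow> set xs \<subseteq> A \<Longrightarrow> ker (map \<phi> xs) = ker xs"
  by (auto simp: ker_def inj_on_eq_iff subset_iff)

lemma hom_op_comp_eq_zero:
  assumes "is_bilabelled K a b" "is_bilabelled H a' b'" "ker b \<noteq> ker a'"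
  shows "op_comp V m (hom_op G H a' b') (hom_op G K a b) = op_zero"
proof -
  have vanish: "hom_op G H a' b' j t * hom_op G K a b t i = 0" for j t i
  proof (rule ccontr)
    assume "hom_op G H a' b' j t * hom_op G K a b t i \<noteq> 0"
    then have "{\<phi>. inj_hom K G \<phi> \<and> map \<phi> a = i \<and> map \<phi> b = t} \<noteq> {}"
      and "{\<psi>. inj_hom H G \<psi> \<and> map \<psi> a' = t \<and> map \<psi> b' = j} \<noteq> {}"
      by (auto simp: hom_op_def card_gt_0_iff)
    then obtain \<phi> \<psi> where "inj_hom K G \<phi>" "map \<phi> b = t" "inj_hom H G \<psi>" "map \<psi> a' = t"
      by blast
    then have "ker b = ker a'"
      using assms(1,2) ker_map_inj_on unfolding is_bilabelled_def inj_hom_def by metis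
    with assms(3) show False by simp
  qed
  show ?thesis by (simp add: op_comp_def op_zero_def vanish)
qed

lemma op_adj_hom_op: "op_adj (hom_op G K a b) = hom_op G K b a"
  by (simp add: op_adj_def hom_op_def conj_commute)

theorem proposition4p5:
  fixes G :: "'g graph" and K :: "'a graph" and H :: "'b graph"
    and a b :: "'a list" and a' b' :: "'b list"
  assumes "is_graph G"
    and "is_bilabelled K a b"
    and "is_bilabelled H a' b'"
  shows
    "(op_tensor (length a) (length b) (length a') (length b') (hom_op G K a b) (hom_op G H a' b')
       = (\<lambda>j i. \<Sum>f\<in>{f. vertex_overlap K H f}.
            hom_op G (glue K H f) (map (fK f) a @ map (fH f) a') (map (fK f) b @ map (fH f) b') j i))
  \<and>
    (length a' = length b \<longrightarrow>
       op_comp (verts G) (length b) (hom_op G H a' b') (hom_op G K a b)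
       = (\<lambda>j i. \<Sum>f\<in>{f. vertex_overlap K H f \<and> (\<forall>i < length b. (b ! i, a' ! i) \<in> f)}.
            hom_op G (glue K H f) (map (fK f) a) (map (fH f) b') j i))
  \<and>
    (length a' = length b \<longrightarrow> ker b \<noteq> ker a' \<longrightarrow>
       op_comp (verts G) (length b) (hom_op G H a' b') (hom_op G K a b) = op_zero)
  \<and>
    op_adj (hom_op G K a b) = hom_op G K b a"
  using hom_op_tensor[OF assms] hom_op_comp[OF assms] hom_op_comp_eq_zero[OF assms(2,3)]
    op_adj_hom_op
  by blast

end
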